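(* Let $r,s\ge0$, $m=r+(n-1)s$, and let $\iota:A_q(n;r,s)\to A_q(n,m)$ be the map described in the context. For every $R$-linear map $\tilde\varphi:A_q(n,m)\to R$ one has $\pi(\Theta(\tilde\varphi))=\Theta'(\tilde\varphi\circ\iota)$; that is, under the identifications $\Theta:A_q(n,m)^*\cong S_q(n,m)$ and $\Theta':A_q(n;r,s)^*\cong S_q(n;r,s)$, $\iota^*=\pi$.
   Context: $R$ commutative ring with $1$, $q\in R$ invertible, $n\ge1$. $A_q(n)$: $R$-algebra on $x_{ij}$ ($1\le i,j\le n$) with relations $x_{ik}x_{jk}=qx_{jk}x_{ik}$ ($i<j$), $x_{ki}x_{kj}=qx_{kj}x_{ki}$ ($i<j$), $x_{ij}x_{kl}=x_{kl}x_{ij}$ ($i<k,j>l$), $x_{ij}x_{kl}=x_{kl}x_{ij}+(q-q^{-1})x_{il}x_{kj}$ ($i<k,j<l$); $A_q(n,m)$ its degree-$m$ part. For $i_1<\dots<i_k$: $(i_1\ldots i_k|j_1\ldots j_k)=\sum_{w\in\mathfrak S_k}(-q)^{l(w)}x_{i_{w1}j_1}\cdots x_{i_{wk}j_k}$. $A_q(n;r,s)=(F(n,r)\otimes F_*(n,s))/Y$ is the bidegree-$(r,s)$ part of the quotient of the tensor product of the free $R$-algebras on $x_{ij}$ and on $x^*_{ij}$ (product: concatenate $x$-parts and $x^*$-parts separately) by the two-sided ideal generated by: the four relations of $A_q(n)$ in the $x_{ij}$; the same four relations in the $x^*_{ij}$ with $q$ replaced by $q^{-1}$; $\sum_kx_{ik}x^*_{jk}$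 and $\sum_kq^{2k}x_{ki}x^*_{kj}$ ($i\ne j$); and $\sum_kq^{2k-2i}x_{ki}x^*_{ki}-\sum_kx_{jk}x^*_{jk}$. $\iota:A_q(n;r,s)\to A_q(n,m)$ is the well-defined $R$-linear map with $\iota(x_{i_1j_1}\cdots x_{i_rj_r}x^*_{k_1l_1}\cdots x^*_{k_sl_s})=x_{i_1j_1}\cdots x_{i_rj_r}\iota(x^*_{k_1l_1})\cdots\iota(x^*_{k_sl_s})$, $\iota(x^*_{ij})=(-q)^{j-i}(1\ldots\hat i\ldots n|1\ldots\hat j\ldots n)$. $V=R^n$ (basis $v_1,\dots,v_n$) is the natural module of the $R$-form $\mathbf U$ of $U_q(\mathfrak{gl}_n)$ (Lusztig divided-power form, base-changed to $R$), with subalgebra $\mathbf U'$ generated by the $K_i^{\pm1}$ and divided powers $e_i^{(l)},f_i^{(l)}$; $V^*$ has dual basis $v_i^*$. For multi-indices, $v_{\mathbf i}=v_{i_1}\otimes\cdots$, $v_{\mathbf i|\mathbf j}=v_{i_1}\otimes\cdots\otimes v_{i_r}\otimes v^*_{j_1}\otimes\cdots\otimes v^*_{j_s}$. $S_q(n,m)$ is the image of $\mathbf U$ (equivalently of $\mathbf U'$) in $\mathrm{End}_R(V^{\otimes m})$, and $S_q(n;r,s)$ is the algebra of endomorphisms of $V^{\otimes r}\otimes{V^*}^{\otimes s}$ commuting with the quantized walled Brauer algebra $\mathfrak B^n_{r,s}(q)$. $\kappa:V^*\to V^{\otimes n-1}$, $v_i^*\mapsto(-q)^i\sum_{w\in\mathfrak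 S_{n-1}}(-q)^{l(w)}v_{(1\ldots\hat i\ldots n).w}$ (place permutation) is a $\mathbf U'$-monomorphism; let $\kappa$ also denote $\mathrm{id}^{\otimes r}\otimes\kappa^{\otimes s}:V^{\otimes r}\otimes{V^*}^{\otimes s}\to V^{\otimes m}$, with image $T^{r,s}$. Every $\varphi\in S_q(n,m)$ maps $T^{r,s}$ into itself, and $\pi:S_q(n,m)\to S_q(n;r,s)$ is $\pi(\varphi)=\kappa^{-1}\circ\varphi|_{T^{r,s}}\circ\kappa$. For $\mathbf i,\mathbf j\in I(n,m)$ let $x_{\mathbf i\mathbf j}=x_{i_1j_1}\cdots x_{i_mj_m}\in A_q(n,m)$ and $E_{\mathbf i\mathbf j}$ the matrix unit $v_{\mathbf j}\mapsto v_{\mathbf i}$; for $\mathbf i,\mathbf k\in I(n,r)$, $\mathbf j,\mathbf l\in I(n,s)$ let $x_{\mathbf i|\mathbf j\,\mathbf k|\mathbf l}=x_{i_1k_1}\cdots x_{i_rk_r}x^*_{j_1l_1}\cdots x^*_{j_sl_s}\in A_q(n;r,s)$ and $E_{\mathbf i|\mathbf j\,\mathbf k|\mathbf l}$ the matrix unit $v_{\mathbf k|\mathbf l}\mapsto v_{\mathbf i|\mathbf j}$. The identifications are $\Theta(\tilde\varphi)=\sum_{\mathbf i,\mathbf j}\tilde\varphi(x_{\mathbf i\mathbf j})E_{\mathbf i\mathbf j}$ and $\Theta'(\tilde\psi)=\sum\tilde\psi(x_{\mathbf i|\mathbf j\,\mathbf k|\mathbf l})E_{\mathbf i|\mathbf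 j\,\mathbf k|\mathbf l}$, which are bijections $A_q(n,m)^*\to S_q(n,m)$ and $A_q(n;r,s)^*\to S_q(n;r,s)$. *)

theory Defs
  imports Main "HOL-Combinatorics.Multiset_Permutations"
begin

definition idx :: "nat \<Rightarrow> nat \<Rightarrow> nat list set" where
  "idx n m = {xs. length xs = m \<and> set xs \<subseteq> {1..n}}"

definition gens :: "nat \<Rightarrow> (nat \<times> nat) set" where
  "gens n = {1..n} \<times> {1..n}"

text \<open>Number of inversions of a list; for a rearrangement p = (i_{w1},...,i_{wk}) of an
  increasing list (i_1,...,i_k) this is the length l(w).\<close>
definition ninv :: "nat list \<Rightarrow> nat" where
  "ninv xs = card {(a, b). a < b \<and> b < length xs \<and> xs ! a > xs ! b}"

definition omit :: "nat \<Rightarrow> nat \<Rightarrow> nat list" where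
  "omit n a = filter (\<lambda>x. x \<noteq> a) [1..<n+1]"

text \<open>Elements of a free R-module on a set of words, written as formal linear
  combinations (lists of coefficient/word pairs).\<close>
type_synonym ('a, 'b) combo = "('a \<times> 'b list) list"

definition cmul :: "('a::comm_ring_1, 'b) combo \<Rightarrow> ('a, 'b) combo \<Rightarrow> ('a, 'b) combo" where
  "cmul c d = [(fst x * fst y, snd x @ snd y). x \<leftarrow> c, y \<leftarrow> d]"

definition cone :: "('a::comm_ring_1, 'b) combo" where
  "cone = [(1, [])]"

definition cscale :: "'a::comm_ring_1 \<Rightarrow> ('a, 'b) combo \<Rightarrow> ('a, 'b) combo" where
  "cscale a c = map (\<lambda>x. (a * fst x, snd x)) c"

definition ev :: "('b list \<Rightarrow> 'a) \<Rightarrow> ('a::comm_ring_1, 'b) combo \<Rightarrow> 'a" where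
  "ev f c = (\<Sum>x\<leftarrow>c. fst x * f (snd x))"

definition cvec :: "('a::comm_ring_1, 'b) combo \<Rightarrow> 'b list \<Rightarrow> 'a" where
  "cvec c w = (\<Sum>x\<leftarrow>c. if snd x = w then fst x else 0)"

text \<open>Defining quadratic relations of A_q(n) (as elements of the free algebra on x_ij);
  qi is the inverse of q.\<close>
definition Aq_rels :: "'a::comm_ring_1 \<Rightarrow> 'a \<Rightarrow> nat \<Rightarrow> ('a, nat \<times> nat) combo set" where
  "Aq_rels q qi n =
     {[(1, [(i,k),(j,k)]), (-q, [(j,k),(i,k)])] | i j k.
         i < j \<and> i \<in> {1..n} \<and> j \<in> {1..n} \<and> k \<in> {1..n}}
   \<union> {[(1, [(k,i),(k,j)]), (-q, [(k,j),(k,i)])] | i j k.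
         i < j \<and> i \<in> {1..n} \<and> j \<in> {1..n} \<and> k \<in> {1..n}}
   \<union> {[(1, [(i,j),(k,l)]), (-1, [(k,l),(i,j)])] | i j k l.
         i < k \<and> j > l \<and> i \<in> {1..n} \<and> j \<in> {1..n} \<and> k \<in> {1..n} \<and> l \<in> {1..n}}
   \<union> {[(1, [(i,j),(k,l)]), (-1, [(k,l),(i,j)]), (-(q - qi), [(i,l),(k,j)])] | i j k l.
         i < k \<and> j < l \<and> i \<in> {1..n} \<and> j \<in> {1..n} \<and> k \<in> {1..n} \<and> l \<in> {1..n}}"

text \<open>R-linear maps A_q(n,m) \<rightarrow> R, viewed as functions on degree-m monomials (words in the
  generators x_ij) that vanish on the degree-m part of the two-sided ideal generated by
  the (homogeneous quadratic) relations, i.e. on all u * rho * v with rho a relation.\<close>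
definition Aq_dual :: "'a::comm_ring_1 \<Rightarrow> 'a \<Rightarrow> nat \<Rightarrow> nat \<Rightarrow> ((nat \<times> nat) list \<Rightarrow> 'a) \<Rightarrow> bool" where
  "Aq_dual q qi n m f \<longleftrightarrow>
     (\<forall>\<rho>\<in>Aq_rels q qi n. \<forall>u v. set u \<subseteq> gens n \<and> set v \<subseteq> gens n \<and>
        length u + 2 + length v = m \<longrightarrow> ev f (cmul (cmul [(1, u)] \<rho>) [(1, v)]) = 0)"

text \<open>Theta: the matrix sum_{i,j} f(x_ij) E_ij, as a function of row index i and column index j.\<close>
definition Theta :: "((nat \<times> nat) list \<Rightarrow> 'a) \<Rightarrow> nat list \<Rightarrow> nat list \<Rightarrow> 'a" where
  "Theta f i j = f (zip i j)"

text \<open>Quantum minor (I|J) = sum_w (-q)^l(w) x_{I_w1 J_1} ... x_{I_wk J_k}, for I increasing.\<close>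
definition qminor :: "'a::comm_ring_1 \<Rightarrow> nat list \<Rightarrow> nat list \<Rightarrow> ('a, nat \<times> nat) combo" where
  "qminor q I J = [((-q) ^ ninv p, zip p J). p \<leftarrow> permutations_of_set_list I]"

text \<open>iota(x*_ab) = (-q)^(b-a) (1..hat a..n | 1..hat b..n); (-q)^(b-a) = (-q)^b (-qi)^a.\<close>
definition iota_star :: "'a::comm_ring_1 \<Rightarrow> 'a \<Rightarrow> nat \<Rightarrow> nat \<Rightarrow> nat \<Rightarrow> ('a, nat \<times> nat) combo" where
  "iota_star q qi n a b = cscale ((-q) ^ b * (-qi) ^ a) (qminor q (omit n a) (omit n b))"

text \<open>iota applied to the monomial x_{i|j k|l} = x_{i1k1}..x_{irkr} x*_{j1l1}..x*_{jsls}.\<close>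
definition iota_mon :: "'a::comm_ring_1 \<Rightarrow> 'a \<Rightarrow> nat \<Rightarrow> nat list \<Rightarrow> nat list \<Rightarrow> nat list \<Rightarrow> nat list
    \<Rightarrow> ('a, nat \<times> nat) combo" where
  "iota_mon q qi n i j k l =
     cmul [(1, zip i k)] (foldr cmul (map2 (iota_star q qi n) j l) cone)"

text \<open>kappa(v*_a) = (-q)^a sum_w (-q)^l(w) v_{(1..hat a..n).w}, as a combination of basis words.\<close>
definition kappa1 :: "'a::comm_ring_1 \<Rightarrow> nat \<Rightarrow> nat \<Rightarrow> ('a, nat) combo" where
  "kappa1 q n a = [((-q) ^ a * (-q) ^ ninv p, p). p \<leftarrow> permutations_of_set_list (omit n a)]"

text \<open>Matrix of kappa = id^{\<otimes> r} \<otimes> kappa^{\<otimes> s}: entry at row w (a basis vector v_w of V^{\<otimes> m})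
  and column (k,l) (the basis vector v_{k|l}).\<close>
definition kappa_mat :: "'a::comm_ring_1 \<Rightarrow> nat \<Rightarrow> nat list \<Rightarrow> nat list \<times> nat list \<Rightarrow> 'a" where
  "kappa_mat q n w kl =
     cvec (cmul [(1, fst kl)] (foldr cmul (map (kappa1 q n) (snd kl)) cone)) w"

text \<open>Basis index set of V^{\<otimes> r} \<otimes> V*^{\<otimes> s}.\<close>
definition idx2 :: "nat \<Rightarrow> nat \<Rightarrow> nat \<Rightarrow> (nat list \<times> nat list) set" where
  "idx2 n r s = idx n r \<times> idx n s"

text \<open>pi(M) = kappa^{-1} o M|_T o kappa, as the (unique) matrix N on V^{\<otimes> r} \<otimes> V*^{\<otimes> s}
  with kappa o N = M o kappa (kappa is injective).\<close>
definition pi_map :: "'a::comm_ring_1 \<Rightarrow> nat \<Rightarrow> nat \<Rightarrow> nat \<Rightarrow> (nat list \<Rightarrow> nat list \<Rightarrow> 'a)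
    \<Rightarrow> (nat list \<times> nat list \<Rightarrow> nat list \<times> nat list \<Rightarrow> 'a)" where
  "pi_map q n r s M = (THE N.
     (\<forall>x y. N x y \<noteq> 0 \<longrightarrow> x \<in> idx2 n r s \<and> y \<in> idx2 n r s) \<and>
     (\<forall>w\<in>idx n (r + (n - 1) * s). \<forall>y\<in>idx2 n r s.
        (\<Sum>x\<in>idx2 n r s. kappa_mat q n w x * N x y) =
        (\<Sum>w'\<in>idx n (r + (n - 1) * s). M w w' * kappa_mat q n w' y)))"

text \<open>Theta': the matrix sum psi(x_{i|j k|l}) E_{i|j k|l}; psi is given by its values on monomials.\<close>
definition Theta' :: "nat \<Rightarrow> nat \<Rightarrow> nat \<Rightarrow> (nat list \<Rightarrow> nat list \<Rightarrow> nat list \<Rightarrow> nat list \<Rightarrow> 'a::zero)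
    \<Rightarrow> nat list \<times> nat list \<Rightarrow> nat list \<times> nat list \<Rightarrow> 'a" where
  "Theta' n r s psi x y =
     (if x \<in> idx2 n r s \<and> y \<in> idx2 n r s then psi (fst x) (snd x) (fst y) (snd y) else 0)"

end

theory Submission
  imports Defs
begin

text \<open>
  A functional f on A_q(n,m) is a function on words in the generators that respects the defining
  relations at every position. Comparing pi(Theta f) with Theta'(f o iota) entry by entry, the
  identity factors over the tensor factors of V*, and for a single factor it reads
  sum_a kappa(v*_a)_z f(iota(x*_ab)) = sum_w f(x_zw) kappa(v*_b)_w for every word z of length n-1.
  Both sides are values of f on the quantum minor with rows and columns 1..n minus one index: on the
  left with the permutation on the row side, on the right on the column side. The relations make a
  minor q-alternating in its row word (swapping adjacent rows costs -q, a repeated row gives 0), and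
  a double Laplace expansion along the first row and the first column shows that the permutation may
  be moved from the columns to the rows; together these identify the two sides. Finally pi(Theta f)
  is the unique matrix N with kappa N = Theta f kappa, and kappa is injective because the row
  indexed by i followed by the words 1..n minus a_1, ..., 1..n minus a_s meets a single column, with
  an invertible entry.
\<close>

section \<open>Relations of A_q(n) on words\<close>

definition Aq_rels_hold :: "'a::comm_ring_1 \<Rightarrow> 'a \<Rightarrow> nat \<Rightarrow> (nat \<times> nat \<Rightarrow> nat \<times> nat \<Rightarrow> 'a) \<Rightarrow> bool"
  where "Aq_rels_hold q qi n g \<longleftrightarrow>
    (\<forall>i\<in>{1..n}. \<forall>j\<in>{1..n}. \<forall>c\<in>{1..n}. \<forall>d\<in>{1..n}.
     (i < j \<longrightarrow> g (i,c) (j,c) = q * g (j,c) (i,c)) \<and>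
     (i < j \<longrightarrow> g (c,i) (c,j) = q * g (c,j) (c,i)) \<and>
     (i < c \<and> j > d \<longrightarrow> g (i,j) (c,d) = g (c,d) (i,j)) \<and>
     (i < c \<and> j < d \<longrightarrow> g (i,j) (c,d) = g (c,d) (i,j) + (q - qi) * g (i,d) (c,j)))"

definition respects_Aq_rels :: "'a::comm_ring_1 \<Rightarrow> 'a \<Rightarrow> nat \<Rightarrow> ((nat \<times> nat) list \<Rightarrow> 'a) \<Rightarrow> nat \<Rightarrow> bool"
  where "respects_Aq_rels q qi n h k \<longleftrightarrow>
    (\<forall>u v. set u \<subseteq> gens n \<longrightarrow> set v \<subseteq> gens n \<longrightarrow> length u + 2 + length v = k \<longrightarrow>
       Aq_rels_hold q qi n (\<lambda>x y. h (u @ x # y # v)))"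

lemma respects_Aq_relsD:
  assumes "respects_Aq_rels q qi n h k" "set u \<subseteq> gens n" "set v \<subseteq> gens n"
    "length u + 2 + length v = k" "i \<in> {1..n}" "j \<in> {1..n}" "c \<in> {1..n}" "d \<in> {1..n}"
  shows "i < j \<Longrightarrow> h (u @ (i,c) # (j,c) # v) = q * h (u @ (j,c) # (i,c) # v)"
    and "i < j \<Longrightarrow> h (u @ (c,i) # (c,j) # v) = q * h (u @ (c,j) # (c,i) # v)"
    and "i < c \<Longrightarrow> j > d \<Longrightarrow> h (u @ (i,j) # (c,d) # v) = h (u @ (c,d) # (i,j) # v)"
    and "i < c \<Longrightarrow> j < d \<Longrightarrow> h (u @ (i,j) # (c,d) # v) =
           h (u @ (c,d) # (i,j) # v) + (q - qi) * h (u @ (i,d) # (c,j) # v)"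
  using assms unfolding respects_Aq_rels_def Aq_rels_hold_def by blast+

lemma respects_Aq_rels_prefix:
  assumes "respects_Aq_rels q qi n h (length p + k)" "set p \<subseteq> gens n"
  shows "respects_Aq_rels q qi n (\<lambda>v. h (p @ v)) k"
  unfolding respects_Aq_rels_def
proof (intro allI impI)
  fix u v assume "set u \<subseteq> gens n" "set v \<subseteq> gens n" "length u + 2 + length v = k"
  then have "set (p @ u) \<subseteq> gens n" "length (p @ u) + 2 + length v = length p + k"
    using assms(2) by auto
  then have "Aq_rels_hold q qi n (\<lambda>x y. h ((p @ u) @ x # y # v))"
    using assms(1) \<open>set v \<subseteq> gens n\<close> unfolding respects_Aq_rels_def by blast
  then show "Aq_rels_hold q qi n (\<lambda>x y. h (p @ u @ x # y # v))" by simp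
qed

lemma respects_Aq_rels_suffix:
  assumes "respects_Aq_rels q qi n h (k + length t)" "set t \<subseteq> gens n"
  shows "respects_Aq_rels q qi n (\<lambda>v. h (v @ t)) k"
  unfolding respects_Aq_rels_def
proof (intro allI impI)
  fix u v assume "set u \<subseteq> gens n" "set v \<subseteq> gens n" "length u + 2 + length v = k"
  then have "Aq_rels_hold q qi n (\<lambda>x y. h (u @ x # y # (v @ t)))"
    using assms unfolding respects_Aq_rels_def by simp
  then show "Aq_rels_hold q qi n (\<lambda>x y. h ((u @ x # y # v) @ t))" by simp
qed

lemma respects_Aq_rels_Cons:
  assumes "respects_Aq_rels q qi n h (Suc k)" "a \<in> {1..n}" "b \<in> {1..n}"
  shows "respects_Aq_rels q qi n (\<lambda>v. h ((a,b) # v)) k"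
  using respects_Aq_rels_prefix[of q qi n h "[(a,b)]" k] assms by (simp add: gens_def)

lemma Aq_dual_imp_respects_Aq_rels:
  assumes "Aq_dual q qi n m f"
  shows "respects_Aq_rels q qi n f m"
  unfolding respects_Aq_rels_def Aq_rels_hold_def
proof (intro allI impI ballI conjI)
  fix u v i j c d
  assume uv: "set u \<subseteq> gens n" "set v \<subseteq> gens n" "length u + 2 + length v = m"
    and ijcd: "i \<in> {1..n}" "j \<in> {1..n}" "c \<in> {1..n}" "d \<in> {1..n}"
  have rel: "ev f (cmul (cmul [(1, u)] \<rho>) [(1, v)]) = 0" if "\<rho> \<in> Aq_rels q qi n" for \<rho>
    using assms uv that unfolding Aq_dual_def by blast
  have ev2: "ev f (cmul (cmul [(1, u)] [(1, [x,y]), (a, [y,x])]) [(1, v)]) =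
      f (u @ x # y # v) + a * f (u @ y # x # v)" for x y a
    by (simp add: ev_def cmul_def)
  have ev3: "ev f (cmul (cmul [(1, u)] [(1, [x,y]), (a, [y,x]), (b, [z,w])]) [(1, v)]) =
      f (u @ x # y # v) + a * f (u @ y # x # v) + b * f (u @ z # w # v)" for x y z w a b
    by (simp add: ev_def cmul_def add.assoc)
  show "f (u @ (i,c) # (j,c) # v) = q * f (u @ (j,c) # (i,c) # v)" if "i < j"
  proof -
    have "[(1, [(i,c),(j,c)]), (-q, [(j,c),(i,c)])] \<in> Aq_rels q qi n"
      using that ijcd unfolding Aq_rels_def by blast
    from rel[OF this] show ?thesis unfolding ev2 by (simp add: eq_neg_iff_add_eq_0[symmetric])
  qed
  show "f (u @ (c,i) # (c,j) # v) = q * f (u @ (c,j) # (c,i) # v)" if "i < j"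
  proof -
    have "[(1, [(c,i),(c,j)]), (-q, [(c,j),(c,i)])] \<in> Aq_rels q qi n"
      using that ijcd unfolding Aq_rels_def by blast
    from rel[OF this] show ?thesis unfolding ev2 by (simp add: eq_neg_iff_add_eq_0[symmetric])
  qed
  show "f (u @ (i,j) # (c,d) # v) = f (u @ (c,d) # (i,j) # v)" if "i < c \<and> j > d"
  proof -
    have "[(1, [(i,j),(c,d)]), (-1, [(c,d),(i,j)])] \<in> Aq_rels q qi n"
      using that ijcd unfolding Aq_rels_def by blast
    from rel[OF this] show ?thesis unfolding ev2 by simp
  qed
  show "f (u @ (i,j) # (c,d) # v) = f (u @ (c,d) # (i,j) # v) + (q - qi) * f (u @ (i,d) # (c,j) # v)"
    if "i < c \<and> j < d"
  proof -
    have "[(1, [(i,j),(c,d)]), (-1, [(c,d),(i,j)]), (-(q - qi), [(i,d),(c,j)])] \<in> Aq_rels q qi n"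
      using that ijcd unfolding Aq_rels_def by blast
    from rel[OF this] show ?thesis
      unfolding ev3 by (simp add: algebra_simps eq_neg_iff_add_eq_0[symmetric])
  qed
qed

section \<open>Quantum minors with the permutation on the columns\<close>

lemma ninv_Cons: "ninv (x # xs) = length (filter (\<lambda>y. y < x) xs) + ninv xs"
proof -
  let ?S = "{(a, b). a < b \<and> b < length (x # xs) \<and> (x # xs) ! a > (x # xs) ! b}"
  let ?T = "{(a, b). a < b \<and> b < length xs \<and> xs ! a > xs ! b}"
  let ?A = "(\<lambda>b. (0::nat, Suc b)) ` {b. b < length xs \<and> xs ! b < x}"
  let ?B = "(\<lambda>(a, b). (Suc a, Suc b)) ` ?T"
  have split: "?S = ?A \<union> ?B"
  proof (rule set_eqI, clarify)
    fix a b
    show "((a, b) \<in> ?S) = ((a, b) \<in> ?A \<union> ?B)"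
      by (cases a; cases b) (auto simp: image_iff)
  qed
  have "finite ?T"
    by (rule finite_subset[of _ "{..<length xs} \<times> {..<length xs}"]) auto
  then have "card ?S = card ?A + card ?B"
    unfolding split by (intro card_Un_disjoint) auto
  moreover have "card ?A = card {b. b < length xs \<and> xs ! b < x}"
    by (rule card_image) (auto simp: inj_on_def)
  moreover have "card ?B = card ?T"
    by (rule card_image) (auto simp: inj_on_def)
  ultimately show ?thesis unfolding ninv_def length_filter_conv_card by simp
qed

lemma ninv_sorted: "sorted_wrt (<) xs \<Longrightarrow> ninv xs = 0"
proof (induction xs)
  case Nil
  then show ?case by (simp add: ninv_def)
next
  case (Cons x xs)
  then have "filter (\<lambda>y. y < x) xs = []" by (auto simp: filter_empty_conv)
  then show ?case using Cons by (simp add: ninv_Cons)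
qed

lemma sum_permutations_of_set_Cons:
  assumes "finite J" "J \<noteq> {}"
  shows "(\<Sum>\<sigma>\<in>permutations_of_set J. g \<sigma>) = (\<Sum>c\<in>J. \<Sum>\<sigma>\<in>permutations_of_set (J - {c}). g (c # \<sigma>))"
proof -
  have "(\<Sum>\<sigma>\<in>permutations_of_set J. g \<sigma>) = (\<Sum>c\<in>J. sum g ((#) c ` permutations_of_set (J - {c})))"
    unfolding permutations_of_set_nonempty[OF assms(2)]
    by (rule sum.UNION_disjoint) (use assms(1) in auto)
  also have "\<dots> = (\<Sum>c\<in>J. \<Sum>\<sigma>\<in>permutations_of_set (J - {c}). g (c # \<sigma>))"
    by (rule sum.cong[OF refl], subst sum.reindex) (auto simp: inj_on_def)
  finally show ?thesis .
qed

lemma length_filter_less_permutation: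
  assumes "\<sigma> \<in> permutations_of_set (J - {c})"
  shows "length (filter (\<lambda>y. y < c) \<sigma>) = card {y\<in>J. y < (c::nat)}"
proof -
  have "length (filter (\<lambda>y. y < c) \<sigma>) = card ({y. y < c} \<inter> (J - {c}))"
    using permutations_of_setD[OF assms] by (simp add: distinct_length_filter)
  also have "{y. y < c} \<inter> (J - {c}) = {y\<in>J. y < c}" by auto
  finally show ?thesis .
qed

lemma card_Diff_doubleton:
  assumes "finite J" "c \<in> J" "d \<in> J" "c \<noteq> d"
  shows "card (J - {c, d}) = card J - 2"
  using assms by (subst card_Diff_subset) auto

lemma card_less_remove:
  fixes c :: nat
  assumes "finite J" "j \<in> J" "j < c"
  shows "card {z\<in>J. z < c} = Suc (card {z\<in>J - {j}. z < c})"
proof -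
  have "{z\<in>J. z < c} = insert j {z\<in>J - {j}. z < c}" using assms by auto
  then show ?thesis using assms(1) by simp
qed

lemma set_zip_subset_gens: "set a \<subseteq> {1..n} \<Longrightarrow> set b \<subseteq> {1..n} \<Longrightarrow> set (zip a b) \<subseteq> gens n"
  by (auto simp: gens_def dest: set_zip_leftD set_zip_rightD)

text \<open>The value of h on the quantum minor with row word a and column set J; unlike in
  qminor, the permutation is placed on the columns.\<close>
definition col_minor :: "'a::comm_ring_1 \<Rightarrow> ((nat \<times> nat) list \<Rightarrow> 'a) \<Rightarrow> nat list \<Rightarrow> nat set \<Rightarrow> 'a"
  where "col_minor q h a J = (\<Sum>\<sigma>\<in>permutations_of_set J. (-q) ^ ninv \<sigma> * h (zip a \<sigma>))"

lemma col_minor_empty: "col_minor q h a {} = h []"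
  by (simp add: col_minor_def ninv_def)

lemma col_minor_Cons:
  assumes "finite J" "J \<noteq> {}"
  shows "col_minor q h (x # a) J =
    (\<Sum>c\<in>J. (-q) ^ card {y\<in>J. y < c} * col_minor q (\<lambda>v. h ((x, c) # v)) a (J - {c}))"
  unfolding col_minor_def sum_permutations_of_set_Cons[OF assms]
  by (rule sum.cong[OF refl])
    (simp add: sum_distrib_left ninv_Cons length_filter_less_permutation power_add mult_ac
      cong: sum.cong)

lemma col_minor_lincomb:
  assumes "\<And>\<sigma>. \<sigma> \<in> permutations_of_set J \<Longrightarrow> g (zip a \<sigma>) = \<alpha> * g1 (zip a \<sigma>) + \<beta> * g2 (zip a \<sigma>)"
  shows "col_minor q g a J = \<alpha> * col_minor q g1 a J + \<beta> * col_minor q g2 a J"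
  unfolding col_minor_def using assms
  by (simp add: sum_distrib_left sum.distrib[symmetric] algebra_simps cong: sum.cong)

lemma col_minor_cong:
  assumes "\<And>\<sigma>. \<sigma> \<in> permutations_of_set J \<Longrightarrow> g (zip a \<sigma>) = g1 (zip a \<sigma>)"
  shows "col_minor q g a J = col_minor q g1 a J"
  unfolding col_minor_def using assms by (simp cong: sum.cong)

text \<open>The inversions contributed by the two leading entries c, d of a permutation of J.\<close>
definition lead_inv2 :: "nat set \<Rightarrow> nat \<Rightarrow> nat \<Rightarrow> nat"
  where "lead_inv2 J c d = card {z\<in>J. z < c} + card {z\<in>J - {c}. z < d}"

lemma lead_inv2_swap:
  assumes "finite J" "c \<in> J" "d \<in> J" "c < d"
  shows "lead_inv2 J d c = Suc (lead_inv2 J c d)"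
proof -
  have "{z\<in>J - {d}. z < c} = {z\<in>J. z < c}" using assms by auto
  then show ?thesis
    unfolding lead_inv2_def card_less_remove[OF assms(1,2,4)] by simp
qed

lemma col_minor_Cons_Cons:
  assumes "finite J" "2 \<le> card J"
  shows "col_minor q h (x # y # a) J = (\<Sum>c\<in>J. \<Sum>d\<in>J - {c}.
    (-q) ^ lead_inv2 J c d * col_minor q (\<lambda>v. h ((x, c) # (y, d) # v)) a (J - {c, d}))"
proof -
  have ne: "J \<noteq> {}" using assms by auto
  have ne2: "J - {c} \<noteq> {}" if "c \<in> J" for c
  proof
    assume "J - {c} = {}"
    then have "card J \<le> 1" using card_mono[of "{c}" J] assms(1) by auto
    then show False using assms by auto
  qed
  show ?thesis
    unfolding col_minor_Cons[OF assms(1) ne]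
    using assms(1) ne2
    by (auto simp: col_minor_Cons lead_inv2_def sum_distrib_left power_add mult_ac
        Diff_insert2[symmetric] insert_commute intro!: sum.cong)
qed

lemma sum_offdiag_antisym:
  fixes D :: "nat \<Rightarrow> nat \<Rightarrow> 'a::comm_ring_1"
  assumes "finite J" "\<And>c d. c \<in> J \<Longrightarrow> d \<in> J \<Longrightarrow> c < d \<Longrightarrow> D c d + D d c = 0"
  shows "(\<Sum>c\<in>J. \<Sum>d\<in>J - {c}. D c d) = 0"
proof -
  have "(\<Sum>d\<in>J - {c}. D c d) =
      (\<Sum>d\<in>J. (if c < d then D c d else 0) + (if d < c then D c d else 0))" for c
    using assms(1) by (intro sum.mono_neutral_cong_left) auto
  then have "(\<Sum>c\<in>J. \<Sum>d\<in>J - {c}. D c d) =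
      (\<Sum>c\<in>J. \<Sum>d\<in>J. if c < d then D c d else 0) + (\<Sum>c\<in>J. \<Sum>d\<in>J. if d < c then D c d else 0)"
    by (simp add: sum.distrib)
  also have "(\<Sum>c\<in>J. \<Sum>d\<in>J. if d < c then D c d else 0) = (\<Sum>c\<in>J. \<Sum>d\<in>J. if c < d then D d c else 0)"
    by (rule sum.swap)
  also have "(\<Sum>c\<in>J. \<Sum>d\<in>J. if c < d then D c d else 0) + \<dots> =
      (\<Sum>c\<in>J. \<Sum>d\<in>J. if c < d then D c d + D d c else 0)"
    by (simp add: sum.distrib[symmetric] if_distrib if_distribR cong: if_cong)
  also have "\<dots> = 0" by (intro sum.neutral ballI) (simp add: assms(2))
  finally show ?thesis .
qed

lemma zip_permutation_Diff_doubleton: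
  assumes "\<sigma> \<in> permutations_of_set (J - {c, d})" "finite J" "c \<in> J" "d \<in> J" "c \<noteq> d"
    "card J = length a + 2" "J \<subseteq> {1..n}" "set a \<subseteq> {1..n}"
  shows "set (zip a \<sigma>) \<subseteq> gens n" "length (zip a \<sigma>) = length a"
proof -
  have "length \<sigma> = length a"
    using length_finite_permutations_of_set[OF assms(1)] card_Diff_doubleton[OF assms(2-5)] assms(6)
    by simp
  then show "length (zip a \<sigma>) = length a" by simp
  show "set (zip a \<sigma>) \<subseteq> gens n"
    using set_zip_subset_gens[OF assms(8)] permutations_of_setD(1)[OF assms(1)] assms(7) by blast
qed

lemma col_minor_swap_head:
  assumes qi: "q * qi = 1" and h: "respects_Aq_rels q qi n h (length a + 2)"
    and J: "card J = length a + 2" "J \<subseteq> {1..n}"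
    and xy: "x < y" "x \<in> {1..n}" "y \<in> {1..n}" and a: "set a \<subseteq> {1..n}"
  shows "col_minor q h (y # x # a) J = -q * col_minor q h (x # y # a) J"
proof -
  have fJ: "finite J" using J finite_subset by blast
  have c2: "2 \<le> card J" using J by simp
  define T where "T c d = col_minor q (\<lambda>v. h ((x, c) # (y, d) # v)) a (J - {c, d})" for c d
  define T' where "T' c d = col_minor q (\<lambda>v. h ((y, c) # (x, d) # v)) a (J - {c, d})" for c d
  define D where "D c d = (-q) ^ lead_inv2 J c d * T' c d + q * ((-q) ^ lead_inv2 J c d * T c d)"
    for c d
  have "col_minor q h (y # x # a) J + q * col_minor q h (x # y # a) J = (\<Sum>c\<in>J. \<Sum>d\<in>J - {c}. D c d)"
    unfolding col_minor_Cons_Cons[OF fJ c2] D_def T_def T'_def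
    by (simp add: sum_distrib_left sum.distrib)
  also have "\<dots> = 0"
  proof (rule sum_offdiag_antisym[OF fJ])
    fix c d assume cd: "c \<in> J" "d \<in> J" "c < d"
    have "c \<in> {1..n}" "d \<in> {1..n}" using cd J by auto
    note word = zip_permutation_Diff_doubleton[OF _ fJ cd(1,2) _ J(1,2) a]
    have Jdc: "J - {d, c} = J - {c, d}" by auto
    have rel4: "T c d = 1 * T' d c + (q - qi) * T d c"
      unfolding T_def T'_def Jdc
      by (rule col_minor_lincomb)
        (use respects_Aq_relsD(4)[OF h, of "[]" _ x c y d] word \<open>c \<in> {1..n}\<close> \<open>d \<in> {1..n}\<close> xy cd
          in auto)
    have rel3: "T d c = T' c d"
      unfolding T_def T'_def Jdc
      by (rule col_minor_cong)
        (use respects_Aq_relsD(3)[OF h, of "[]" _ x d y c] word \<open>c \<in> {1..n}\<close> \<open>d \<in> {1..n}\<close> xy cd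
          in auto)
    have "D c d + D d c = (-q) ^ lead_inv2 J c d * T' c d * (1 - q * qi)"
      unfolding D_def lead_inv2_swap[OF fJ cd] rel4 rel3 by (simp add: algebra_simps)
    then show "D c d + D d c = 0" using qi by simp
  qed
  finally show ?thesis by (simp add: eq_neg_iff_add_eq_0)
qed

lemma col_minor_repeat_head:
  assumes h: "respects_Aq_rels q qi n h (length a + 2)"
    and J: "card J = length a + 2" "J \<subseteq> {1..n}"
    and x: "x \<in> {1..n}" and a: "set a \<subseteq> {1..n}"
  shows "col_minor q h (x # x # a) J = 0"
proof -
  have fJ: "finite J" using J finite_subset by blast
  have c2: "2 \<le> card J" using J by simp
  define T where "T c d = col_minor q (\<lambda>v. h ((x, c) # (x, d) # v)) a (J - {c, d})" for c d
  have "col_minor q h (x # x # a) J = (\<Sum>c\<in>J. \<Sum>d\<in>J - {c}. (-q) ^ lead_inv2 J c d * T c d)"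
    unfolding col_minor_Cons_Cons[OF fJ c2] T_def by simp
  also have "\<dots> = 0"
  proof (rule sum_offdiag_antisym[OF fJ])
    fix c d assume cd: "c \<in> J" "d \<in> J" "c < d"
    have "c \<in> {1..n}" "d \<in> {1..n}" using cd J by auto
    note word = zip_permutation_Diff_doubleton[OF _ fJ cd(1,2) _ J(1,2) a]
    have Jdc: "J - {d, c} = J - {c, d}" by auto
    have "T c d = q * T d c + 0 * T d c"
      unfolding T_def Jdc
      by (rule col_minor_lincomb)
        (use respects_Aq_relsD(2)[OF h, of "[]" _ c d x] word \<open>c \<in> {1..n}\<close> \<open>d \<in> {1..n}\<close> x cd
          in auto)
    then show "(-q) ^ lead_inv2 J c d * T c d + (-q) ^ lead_inv2 J d c * T d c = 0"
      unfolding lead_inv2_swap[OF fJ cd] by (simp add: algebra_simps)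
  qed
  finally show ?thesis .
qed

text \<open>Expanding along the leading rows reduces to the case of an empty left context u.\<close>
lemma col_minor_append_left:
  assumes step: "\<And>h J. respects_Aq_rels q qi n h (length b) \<Longrightarrow> card J = length b \<Longrightarrow>
      J \<subseteq> {1..n} \<Longrightarrow> col_minor q h b J = \<alpha> * col_minor q h b' J"
    and "respects_Aq_rels q qi n h (length u + length b)" "card J = length u + length b"
      "J \<subseteq> {1..n}" "set u \<subseteq> {1..n}"
  shows "col_minor q h (u @ b) J = \<alpha> * col_minor q h (u @ b') J"
  using assms(2-)
proof (induction u arbitrary: h J)
  case Nil
  then show ?case using step by simp
next
  case (Cons z u)
  have fJ: "finite J" and ne: "J \<noteq> {}" using Cons.prems finite_subset by auto
  have "col_minor q (\<lambda>v. h ((z, c) # v)) (u @ b) (J - {c}) =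
      \<alpha> * col_minor q (\<lambda>v. h ((z, c) # v)) (u @ b') (J - {c})" if "c \<in> J" for c
    using Cons.prems that fJ by (intro Cons.IH respects_Aq_rels_Cons) auto
  then show ?case
    by (simp add: col_minor_Cons[OF fJ ne] sum_distrib_left mult_ac cong: sum.cong)
qed

lemma col_minor_swap_adjacent:
  assumes "q * qi = 1" "respects_Aq_rels q qi n h (length u + length a + 2)"
    "card J = length u + length a + 2" "J \<subseteq> {1..n}"
    "x < y" "x \<in> {1..n}" "y \<in> {1..n}" "set a \<subseteq> {1..n}" "set u \<subseteq> {1..n}"
  shows "col_minor q h (u @ y # x # a) J = -q * col_minor q h (u @ x # y # a) J"
  using assms by (intro col_minor_append_left[where b = "y # x # a"] col_minor_swap_head) auto

lemma col_minor_repeat_adjacent: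
  assumes "respects_Aq_rels q qi n h (length u + length a + 2)"
    "card J = length u + length a + 2" "J \<subseteq> {1..n}"
    "x \<in> {1..n}" "set a \<subseteq> {1..n}" "set u \<subseteq> {1..n}"
  shows "col_minor q h (u @ x # x # a) J = 0"
proof -
  have "col_minor q h (u @ x # x # a) J = 0 * col_minor q h (u @ x # x # a) J"
    using assms by (intro col_minor_append_left[where b = "x # x # a"])
      (use col_minor_repeat_head[of q qi n _ a _ x] in auto)
  then show ?thesis by simp
qed

lemma col_minor_insort:
  assumes qi: "q * qi = 1" and "respects_Aq_rels q qi n h (length u + Suc (length b))"
    and "card J = length u + Suc (length b)" "J \<subseteq> {1..n}"
    and "x \<in> {1..n}" "set b \<subseteq> {1..n}" "set u \<subseteq> {1..n}" "sorted b"
  shows "col_minor q h (u @ x # b) J =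
    (-q) ^ length (filter (\<lambda>y. y < x) b) * col_minor q h (u @ insort x b) J"
  using assms(2-)
proof (induction b arbitrary: u)
  case Nil
  then show ?case by simp
next
  case (Cons b1 b)
  show ?case
  proof (cases "x \<le> b1")
    case True
    then have "filter (\<lambda>y. y < x) (b1 # b) = []"
      using Cons.prems(7) by (auto simp: filter_empty_conv)
    then show ?thesis using True by simp
  next
    case False
    have "col_minor q h (u @ x # b1 # b) J = -q * col_minor q h ((u @ [b1]) @ x # b) J"
      using False Cons.prems by (subst col_minor_swap_adjacent[OF qi]) auto
    also have "\<dots> = -q * ((-q) ^ length (filter (\<lambda>y. y < x) b) *
        col_minor q h ((u @ [b1]) @ insort x b) J)"
      using Cons.prems by (subst Cons.IH) auto
    finally show ?thesis using False by simp
  qed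
qed

lemma col_minor_sort:
  assumes qi: "q * qi = 1" and "respects_Aq_rels q qi n h (length a)"
    and "card J = length a" "J \<subseteq> {1..n}" "set a \<subseteq> {1..n}"
  shows "col_minor q h a J = (-q) ^ ninv a * col_minor q h (sort a) J"
  using assms(2-)
proof (induction a arbitrary: h J)
  case Nil
  then show ?case by (simp add: ninv_def)
next
  case (Cons x a)
  have fJ: "finite J" and ne: "J \<noteq> {}" using Cons.prems finite_subset by auto
  have "col_minor q (\<lambda>v. h ((x, c) # v)) a (J - {c}) =
      (-q) ^ ninv a * col_minor q (\<lambda>v. h ((x, c) # v)) (sort a) (J - {c})" if "c \<in> J" for c
    using Cons.prems that fJ by (intro Cons.IH respects_Aq_rels_Cons) auto
  then have "col_minor q h (x # a) J = (-q) ^ ninv a * col_minor q h ([] @ x # sort a) J"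
    by (simp add: col_minor_Cons[OF fJ ne] sum_distrib_left mult_ac cong: sum.cong)
  moreover have "col_minor q h ([] @ x # sort a) J =
      (-q) ^ length (filter (\<lambda>y. y < x) (sort a)) * col_minor q h ([] @ insort x (sort a)) J"
    using Cons.prems by (intro col_minor_insort[OF qi]) auto
  moreover have "length (filter (\<lambda>y. y < x) (sort a)) = length (filter (\<lambda>y. y < x) a)"
    by (metis mset_filter mset_sort size_mset)
  ultimately show ?case by (simp add: ninv_Cons power_add mult_ac)
qed

lemma sorted_not_distinct_adjacent:
  assumes "sorted xs" "\<not> distinct xs"
  obtains u x v where "xs = u @ x # x # v"
  using assms
proof (induction xs arbitrary: thesis)
  case Nil
  then show ?case by simp
next
  case (Cons y xs)
  show ?case
  proof (cases "distinct xs")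
    case True
    then have "y \<in> set xs" using Cons.prems by simp
    then obtain zs where "xs = y # zs"
      using Cons.prems(2) by (cases xs) (auto simp: antisym)
    then show ?thesis using Cons.prems(1)[of "[]"] by simp
  next
    case False
    then show ?thesis using Cons.IH[of thesis] Cons.prems by (metis append_Cons sorted_simps(2))
  qed
qed

lemma col_minor_not_distinct:
  assumes qi: "q * qi = 1" and h: "respects_Aq_rels q qi n h (length a)"
    and J: "card J = length a" "J \<subseteq> {1..n}" and a: "set a \<subseteq> {1..n}" and "\<not> distinct a"
  shows "col_minor q h a J = 0"
proof -
  obtain u x v where s: "sort a = u @ x # x # v"
    using sorted_not_distinct_adjacent[of "sort a"] \<open>\<not> distinct a\<close> by (metis distinct_sort sorted_sort)
  have "set (sort a) \<subseteq> {1..n}" "length (sort a) = length a" using a by simp_all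
  then have "col_minor q h (sort a) J = 0"
    unfolding s using h J by (intro col_minor_repeat_adjacent) auto
  then show ?thesis using col_minor_sort[OF qi h J a] by simp
qed

section \<open>Moving the permutation from the columns to the rows\<close>

lemma sorted_list_of_set_least_Cons:
  assumes "finite I" "i \<in> I" "\<forall>z\<in>I. i \<le> z"
  shows "sorted_list_of_set I = i # sorted_list_of_set (I - {i})"
proof -
  have "Min I = i" using assms by (intro Min_eqI) auto
  then show ?thesis using sorted_list_of_set_nonempty[of I] assms by auto
qed

lemma sum_count_less_remove_least:
  fixes F :: "nat \<Rightarrow> 'a::comm_ring_1"
  assumes "finite J" "j \<in> J" "\<forall>z\<in>J. j \<le> z"
  shows "(\<Sum>c\<in>J. (-q) ^ card {z\<in>J. z < c} * F c) =
    F j + (-q) * (\<Sum>c\<in>J - {j}. (-q) ^ card {z\<in>J - {j}. z < c} * F c)"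
proof -
  have "{z\<in>J. z < j} = {}" using assms(3) by force
  then have "(-q) ^ card {z\<in>J. z < j} * F j = F j" by (simp only: card.empty power_0 mult_1)
  then have "(\<Sum>c\<in>J. (-q) ^ card {z\<in>J. z < c} * F c) =
      F j + (\<Sum>c\<in>J - {j}. (-q) ^ card {z\<in>J. z < c} * F c)"
    using sum.remove[OF assms(1,2), of "\<lambda>c. (-q) ^ card {z\<in>J. z < c} * F c"] by (simp only:)
  also have "(\<Sum>c\<in>J - {j}. (-q) ^ card {z\<in>J. z < c} * F c) =
      (\<Sum>c\<in>J - {j}. (-q) * ((-q) ^ card {z\<in>J - {j}. z < c} * F c))"
  proof (rule sum.cong[OF refl])
    fix c assume "c \<in> J - {j}"
    then have "card {z\<in>J. z < c} = Suc (card {z\<in>J - {j}. z < c})"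
      using assms by (intro card_less_remove) force+
    then show "(-q) ^ card {z\<in>J. z < c} * F c = (-q) * ((-q) ^ card {z\<in>J - {j}. z < c} * F c)"
      by simp
  qed
  finally show ?thesis by (simp add: sum_distrib_left)
qed

lemma col_minor_sorted_Cons:
  assumes "finite I" "i \<in> I" "\<forall>z\<in>I. i \<le> z" "finite J" "J \<noteq> {}"
  shows "col_minor q h (sorted_list_of_set I) J = (\<Sum>c\<in>J. (-q) ^ card {z\<in>J. z < c} *
    col_minor q (\<lambda>v. h ((i, c) # v)) (sorted_list_of_set (I - {i})) (J - {c}))"
  unfolding sorted_list_of_set_least_Cons[OF assms(1-3)] by (rule col_minor_Cons[OF assms(4,5)])

text \<open>The transposition identity in size k, for all functionals at once, so that it can serve
  as induction hypothesis for the smaller minors produced by the Laplace expansions.\<close>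
definition col_minor_transposable :: "'a::comm_ring_1 \<Rightarrow> 'a \<Rightarrow> nat \<Rightarrow> nat \<Rightarrow> bool"
  where "col_minor_transposable q qi n k \<longleftrightarrow>
    (\<forall>h I J. respects_Aq_rels q qi n h k \<longrightarrow> card I = k \<longrightarrow> card J = k \<longrightarrow>
       I \<subseteq> {1..n} \<longrightarrow> J \<subseteq> {1..n} \<longrightarrow>
       col_minor q h (sorted_list_of_set I) J =
       col_minor q (\<lambda>v. h (map prod.swap v)) (sorted_list_of_set J) I)"

lemma col_minor_transposableD:
  assumes "col_minor_transposable q qi n k" "respects_Aq_rels q qi n h k" "card I = k" "card J = k"
    "I \<subseteq> {1..n}" "J \<subseteq> {1..n}"
  shows "col_minor q h (sorted_list_of_set I) J =
    col_minor q (\<lambda>v. h (map prod.swap v)) (sorted_list_of_set J) I"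
  using assms unfolding col_minor_transposable_def by blast

lemma col_minor_transpose_expand:
  assumes T: "col_minor_transposable q qi n k" and h: "respects_Aq_rels q qi n h k"
    and IJ: "card I = k" "card J = k" "I \<subseteq> {1..n}" "J \<subseteq> {1..n}"
    and j: "j \<in> J" "\<forall>z\<in>J. j \<le> z"
  shows "col_minor q h (sorted_list_of_set I) J = (\<Sum>r\<in>I. (-q) ^ card {z\<in>I. z < r} *
    col_minor q (\<lambda>v. h ((r, j) # map prod.swap v)) (sorted_list_of_set (J - {j})) (I - {r}))"
proof -
  have "finite I" "finite J" using IJ finite_subset by auto
  moreover have "I \<noteq> {}" using IJ j \<open>finite J\<close> by (metis card.empty card_0_eq empty_iff)
  ultimately show ?thesis
    unfolding col_minor_transposableD[OF T h IJ]
    using j by (subst col_minor_sorted_Cons) auto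
qed

lemma col_minor_swap_lead_transposed:
  assumes T: "col_minor_transposable q qi n k" and h: "respects_Aq_rels q qi n h (k + 2)"
    and IJ: "card I = k" "card J = k" "I \<subseteq> {1..n}" "J \<subseteq> {1..n}"
    and ir: "i < r" "i \<in> {1..n}" "r \<in> {1..n}" and jc: "j < c" "j \<in> {1..n}" "c \<in> {1..n}"
  shows "col_minor q (\<lambda>v. h ((r, j) # (i, c) # v)) (sorted_list_of_set I) J =
    col_minor q (\<lambda>v. h ((i, c) # (r, j) # map prod.swap v)) (sorted_list_of_set J) I"
proof -
  have "respects_Aq_rels q qi n (\<lambda>v. h ([(r, j), (i, c)] @ v)) k"
    using h ir jc by (intro respects_Aq_rels_prefix) (auto simp: gens_def add.commute)
  then have "col_minor q (\<lambda>v. h ((r, j) # (i, c) # v)) (sorted_list_of_set I) J =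
      col_minor q (\<lambda>v. h ((r, j) # (i, c) # map prod.swap v)) (sorted_list_of_set J) I"
    using col_minor_transposableD[OF T _ IJ] by simp
  also have "\<dots> = col_minor q (\<lambda>v. h ((i, c) # (r, j) # map prod.swap v)) (sorted_list_of_set J) I"
  proof (rule col_minor_cong)
    fix \<sigma> assume \<sigma>: "\<sigma> \<in> permutations_of_set I"
    let ?w = "map prod.swap (zip (sorted_list_of_set J) \<sigma>)"
    have "finite J" using IJ finite_subset by auto
    then have "set (zip (sorted_list_of_set J) \<sigma>) \<subseteq> gens n"
      using IJ permutations_of_setD(1)[OF \<sigma>] by (intro set_zip_subset_gens) auto
    then have "set ?w \<subseteq> gens n" by (auto simp: gens_def)
    moreover have "length [] + 2 + length ?w = k + 2"
      using length_finite_permutations_of_set[OF \<sigma>] IJ \<open>finite J\<close> by simp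
    ultimately show "h ((r, j) # (i, c) # ?w) = h ((i, c) # (r, j) # ?w)"
      using respects_Aq_relsD(3)[OF h, of "[]" ?w i c r j] ir jc by simp
  qed
  finally show ?thesis .
qed

lemma col_minor_transposable_0: "col_minor_transposable q qi n 0"
  unfolding col_minor_transposable_def
  by (auto simp: card_eq_0_iff col_minor_empty dest: finite_subset[OF _ finite_atLeastAtMost])

lemma col_minor_expand_lead_col:
  assumes T: "col_minor_transposable q qi n k" and T': "col_minor_transposable q qi n (k - 1)"
    and h: "respects_Aq_rels q qi n h (Suc k)"
    and IJ: "card I = Suc k" "card J = Suc k" "I \<subseteq> {1..n}" "J \<subseteq> {1..n}"
    and i1: "i1 \<in> I" "\<forall>z\<in>I. i1 \<le> z" and j1: "j1 \<in> J" "\<forall>z\<in>J. j1 \<le> z"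
    and r: "r \<in> I - {i1}"
  shows "col_minor q (\<lambda>v. h ((r, j1) # map prod.swap v)) (sorted_list_of_set (J - {j1})) (I - {r}) =
    (\<Sum>c\<in>J - {j1}. (-q) ^ card {z\<in>J - {j1}. z < c} *
      col_minor q (\<lambda>v. h ((i1, c) # (r, j1) # map prod.swap v))
        (sorted_list_of_set (J - {j1, c})) (I - {i1, r}))"
proof -
  have fI: "finite I" and fJ: "finite J" using IJ finite_subset by auto
  have I1: "finite (I - {r})" "i1 \<in> I - {r}" "\<forall>z\<in>I - {r}. i1 \<le> z" "card (I - {r}) = k"
    using r i1 fI IJ by auto
  then have "1 \<le> k" by (metis One_nat_def Suc_leI card_gt_0_iff empty_iff)
  have J1: "finite (J - {j1})" "card (J - {j1}) = k" using fJ j1 IJ by auto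
  then have "J - {j1} \<noteq> {}" using \<open>1 \<le> k\<close> by (metis card.empty not_one_le_zero)
  have hr: "respects_Aq_rels q qi n (\<lambda>v. h ((r, j1) # v)) k"
    using r j1 IJ by (intro respects_Aq_rels_Cons[OF h]) auto
  have "col_minor q (\<lambda>v. h ((r, j1) # map prod.swap v)) (sorted_list_of_set (J - {j1})) (I - {r}) =
      col_minor q (\<lambda>v. h ((r, j1) # v)) (sorted_list_of_set (I - {r})) (J - {j1})"
    using col_minor_transposableD[OF T hr I1(4) J1(2)] IJ(3,4) by (metis Diff_subset subset_trans)
  also have "\<dots> = (\<Sum>c\<in>J - {j1}. (-q) ^ card {z\<in>J - {j1}. z < c} *
      col_minor q (\<lambda>v. h ((r, j1) # (i1, c) # v)) (sorted_list_of_set (I - {i1, r})) (J - {j1, c}))"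
    unfolding col_minor_sorted_Cons[OF I1(1-3) J1(1) \<open>J - {j1} \<noteq> {}\<close>] by (simp add: Diff_insert2[symmetric] insert_commute)
  also have "\<dots> = (\<Sum>c\<in>J - {j1}. (-q) ^ card {z\<in>J - {j1}. z < c} *
      col_minor q (\<lambda>v. h ((i1, c) # (r, j1) # map prod.swap v))
        (sorted_list_of_set (J - {j1, c})) (I - {i1, r}))"
  proof (rule sum.cong[OF refl])
    fix c assume c: "c \<in> J - {j1}"
    have "i1 < r" "j1 < c" using r c i1 j1 by force+
    moreover have "card (I - {i1, r}) = k - 1" "card (J - {j1, c}) = k - 1"
      using card_Diff_doubleton[OF fI i1(1), of r] card_Diff_doubleton[OF fJ j1(1), of c] r c IJ
      by auto
    moreover have "respects_Aq_rels q qi n h (k - 1 + 2)" using h \<open>1 \<le> k\<close> by simp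
    moreover have "I - {i1, r} \<subseteq> {1..n}" "J - {j1, c} \<subseteq> {1..n}"
      "i1 \<in> {1..n}" "r \<in> {1..n}" "j1 \<in> {1..n}" "c \<in> {1..n}"
      using IJ r c i1 j1 by auto
    ultimately show "(-q) ^ card {z\<in>J - {j1}. z < c} * col_minor q (\<lambda>v. h ((r, j1) # (i1, c) # v))
          (sorted_list_of_set (I - {i1, r})) (J - {j1, c}) =
        (-q) ^ card {z\<in>J - {j1}. z < c} * col_minor q (\<lambda>v. h ((i1, c) # (r, j1) # map prod.swap v))
          (sorted_list_of_set (J - {j1, c})) (I - {i1, r})"
      by (simp add: col_minor_swap_lead_transposed[OF T'])
  qed
  finally show ?thesis .
qed

lemma col_minor_transposable_Suc:
  assumes T: "col_minor_transposable q qi n k" and T': "col_minor_transposable q qi n (k - 1)"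
  shows "col_minor_transposable q qi n (Suc k)"
  unfolding col_minor_transposable_def
proof (intro allI impI)
  fix h I J
  assume h: "respects_Aq_rels q qi n h (Suc k)" and IJ: "card I = Suc k" "card J = Suc k"
    "I \<subseteq> {1..n}" "J \<subseteq> {1..n}"
  have fI: "finite I" and fJ: "finite J" using IJ finite_subset by auto
  have "I \<noteq> {}" "J \<noteq> {}" using IJ by auto
  define i1 where "i1 = Min I"
  define j1 where "j1 = Min J"
  have i1: "i1 \<in> I" "\<forall>z\<in>I. i1 \<le> z" using fI \<open>I \<noteq> {}\<close> by (auto simp: i1_def)
  have j1: "j1 \<in> J" "\<forall>z\<in>J. j1 \<le> z" using fJ \<open>J \<noteq> {}\<close> by (auto simp: j1_def)
  have IJ1: "card (I - {i}) = k" "card (J - {j}) = k" "I - {i} \<subseteq> {1..n}" "J - {j} \<subseteq> {1..n}"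
    if "i \<in> I" "j \<in> J" for i j
    using that IJ fI fJ by auto
  have h1: "respects_Aq_rels q qi n (\<lambda>v. h ((i, j) # v)) k" if "i \<in> I" "j \<in> J" for i j
    using that IJ by (intro respects_Aq_rels_Cons[OF h]) auto
  define X where "X c = col_minor q (\<lambda>v. h ((i1, c) # v)) (sorted_list_of_set (I - {i1})) (J - {c})"
    for c
  define Y where "Y r = col_minor q (\<lambda>v. h ((r, j1) # map prod.swap v))
    (sorted_list_of_set (J - {j1})) (I - {r})" for r
  txt \<open>Apart from the terms for (i1, j1), both sides expand into the minors Z c r in which the
    entries (i1, c) and (r, j1) have been fixed.\<close>
  define Z where "Z c r = col_minor q (\<lambda>v. h ((i1, c) # (r, j1) # map prod.swap v))
    (sorted_list_of_set (J - {j1, c})) (I - {i1, r})" for c r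
  define w where "w A x = (-q) ^ card {z\<in>A. z < x}" for A and x :: nat
  have lhs: "col_minor q h (sorted_list_of_set I) J = X j1 + (-q) * (\<Sum>c\<in>J - {j1}. w (J - {j1}) c * X c)"
    unfolding col_minor_sorted_Cons[OF fI i1 fJ \<open>J \<noteq> {}\<close>] X_def w_def
    by (rule sum_count_less_remove_least[OF fJ j1])
  have "col_minor q (\<lambda>v. h (map prod.swap v)) (sorted_list_of_set J) I = (\<Sum>r\<in>I. w I r * Y r)"
    unfolding col_minor_sorted_Cons[OF fJ j1 fI \<open>I \<noteq> {}\<close>] Y_def w_def by simp
  then have rhs: "col_minor q (\<lambda>v. h (map prod.swap v)) (sorted_list_of_set J) I =
      Y i1 + (-q) * (\<Sum>r\<in>I - {i1}. w (I - {i1}) r * Y r)"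
    unfolding w_def by (simp add: sum_count_less_remove_least[OF fI i1])
  have XY: "X j1 = Y i1"
    unfolding X_def Y_def
    using col_minor_transposableD[OF T h1[OF i1(1) j1(1)] IJ1[OF i1(1) j1(1)]] by simp
  have Xc: "X c = (\<Sum>r\<in>I - {i1}. w (I - {i1}) r * Z c r)" if c: "c \<in> J - {j1}" for c
  proof -
    have cJ: "c \<in> J" using c by simp
    have "j1 \<in> J - {c}" "\<forall>z\<in>J - {c}. j1 \<le> z" using c j1 by auto
    moreover have "J - {c} - {j1} = J - {j1, c}" "I - {i1} - {r} = I - {i1, r}" for r by auto
    ultimately show ?thesis
      using col_minor_transpose_expand[OF T h1[OF i1(1) cJ] IJ1[OF i1(1) cJ]] c
      unfolding X_def Z_def w_def by simp
  qed
  have Yr: "Y r = (\<Sum>c\<in>J - {j1}. w (J - {j1}) c * Z c r)" if "r \<in> I - {i1}" for r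
    unfolding Y_def Z_def w_def by (rule col_minor_expand_lead_col[OF T T' h IJ i1 j1 that])
  have "(\<Sum>c\<in>J - {j1}. w (J - {j1}) c * X c) =
      (\<Sum>c\<in>J - {j1}. \<Sum>r\<in>I - {i1}. w (J - {j1}) c * (w (I - {i1}) r * Z c r))"
    by (intro sum.cong refl) (simp add: Xc sum_distrib_left)
  also have "\<dots> = (\<Sum>r\<in>I - {i1}. \<Sum>c\<in>J - {j1}. w (J - {j1}) c * (w (I - {i1}) r * Z c r))"
    by (rule sum.swap)
  also have "\<dots> = (\<Sum>r\<in>I - {i1}. w (I - {i1}) r * Y r)"
    by (intro sum.cong refl) (simp add: Yr sum_distrib_left mult_ac)
  finally show "col_minor q h (sorted_list_of_set I) J =
      col_minor q (\<lambda>v. h (map prod.swap v)) (sorted_list_of_set J) I"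
    unfolding lhs rhs XY by simp
qed

lemma col_minor_transposable: "col_minor_transposable q qi n k"
proof (induction k rule: less_induct)
  case (less k)
  then show ?case
    by (cases k) (auto intro: col_minor_transposable_0 col_minor_transposable_Suc)
qed

lemma col_minor_transpose:
  assumes "respects_Aq_rels q qi n h k" "card I = k" "card J = k" "I \<subseteq> {1..n}" "J \<subseteq> {1..n}"
  shows "col_minor q h (sorted_list_of_set I) J =
    col_minor q (\<lambda>v. h (map prod.swap v)) (sorted_list_of_set J) I"
  using col_minor_transposableD[OF col_minor_transposable assms] .

section \<open>Formal combinations, kappa and iota\<close>

lemma set_omit: "set (omit n a) = {1..n} - {a}"
  by (auto simp: omit_def)

lemma distinct_omit: "distinct (omit n a)"
  by (simp add: omit_def)

lemma omit_eq_sorted_list_of_set: "omit n a = sorted_list_of_set ({1..n} - {a})"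
proof -
  have "sorted (omit n a)" unfolding omit_def by (intro sorted_wrt_filter sorted_upt)
  then show ?thesis
    using sorted_list_of_set.idem_if_sorted_distinct[OF _ distinct_omit] set_omit by metis
qed

lemma length_omit: "a \<in> {1..n} \<Longrightarrow> length (omit n a) = n - 1"
  by (simp add: omit_eq_sorted_list_of_set)

lemma ninv_omit: "ninv (omit n a) = 0"
  by (rule ninv_sorted) (simp add: omit_eq_sorted_list_of_set)

lemma set_permutations_of_set_list_omit:
  "set (permutations_of_set_list (omit n a)) = permutations_of_set ({1..n} - {a})"
  using permutations_of_list[of "omit n a"] distinct_omit set_omit by (metis distinct_remdups_id)

lemma omit_in_permutations_of_set_iff:
  assumes "a \<in> {1..n}" "a' \<in> {1..n}"
  shows "omit n a \<in> permutations_of_set ({1..n} - {a'}) \<longleftrightarrow> a = a'"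
proof -
  have "{1..n} - {a} = {1..n} - {a'} \<longleftrightarrow> a = a'" using assms by blast
  then show ?thesis using distinct_omit[of n a] by (auto simp: permutations_of_set_def set_omit)
qed

lemma finite_idx: "finite (idx n m)"
proof -
  have "idx n m = {xs. set xs \<subseteq> {1..n} \<and> length xs = m}" by (auto simp: idx_def)
  then show ?thesis using finite_lists_length_eq[of "{1..n}" m] by simp
qed

lemma permutations_of_set_subset_idx: "a \<in> {1..n} \<Longrightarrow> permutations_of_set ({1..n} - {a}) \<subseteq> idx n (n - 1)"
  using permutations_of_setD(1) length_finite_permutations_of_set by (fastforce simp: idx_def)

lemma sum_idx_Suc: "(\<Sum>j\<in>idx n (Suc s). F j) = (\<Sum>a\<in>{1..n}. \<Sum>j\<in>idx n s. F (a # j))"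
proof -
  have "idx n (Suc s) = (\<lambda>(a, j). a # j) ` ({1..n} \<times> idx n s)"
    by (auto simp: idx_def image_iff length_Suc_conv)
  moreover have "inj_on (\<lambda>(a, j). a # j) ({1..n} \<times> idx n s)" by (auto simp: inj_on_def)
  ultimately show ?thesis by (simp add: sum.reindex sum.cartesian_product split_def)
qed

lemma sum_idx_add: "(\<Sum>w\<in>idx n (A + B). F w) = (\<Sum>w1\<in>idx n A. \<Sum>w2\<in>idx n B. F (w1 @ w2))"
proof -
  have "idx n (A + B) = (\<lambda>(u, v). u @ v) ` (idx n A \<times> idx n B)"
  proof (intro set_eqI iffI)
    fix x assume "x \<in> idx n (A + B)"
    then have "x = take A x @ drop A x" "take A x \<in> idx n A" "drop A x \<in> idx n B"
      by (auto simp: idx_def dest: in_set_takeD in_set_dropD)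
    then show "x \<in> (\<lambda>(u, v). u @ v) ` (idx n A \<times> idx n B)"
      by (intro image_eqI[of _ _ "(take A x, drop A x)"]) auto
  qed (auto simp: idx_def subset_iff)
  moreover have "inj_on (\<lambda>(u, v). u @ v) (idx n A \<times> idx n B)" by (auto simp: inj_on_def idx_def)
  ultimately show ?thesis by (simp add: sum.reindex sum.cartesian_product split_def)
qed

lemma ev_cone: "ev h cone = h []"
  by (simp add: ev_def cone_def)

lemma ev_cscale: "ev h (cscale a c) = a * ev h c"
  by (induction c) (auto simp: ev_def cscale_def algebra_simps)

lemma ev_cmul: "ev h (cmul c d) = ev (\<lambda>u. ev (\<lambda>v. h (u @ v)) d) c"
  by (induction c) (auto simp: ev_def cmul_def comp_def sum_list_const_mult mult.assoc)

lemma ev_cmul_single: "ev h (cmul [(1, u)] c) = ev (\<lambda>v. h (u @ v)) c"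
  unfolding ev_cmul by (simp add: ev_def)

lemma ev_sum: "ev (\<lambda>v. \<Sum>w\<in>W. F w v) c = (\<Sum>w\<in>W. ev (F w) c)"
  by (induction c) (auto simp: ev_def sum.distrib sum_distrib_left)

lemma ev_const_mult: "ev (\<lambda>v. a * g v) c = a * ev g c"
  by (induction c) (auto simp: ev_def algebra_simps)

lemma ev_cong: "(\<And>x. x \<in> set c \<Longrightarrow> f (snd x) = g (snd x)) \<Longrightarrow> ev f c = ev g c"
  by (induction c) (auto simp: ev_def)

lemma map_swap_zip: "map prod.swap (zip x y) = zip y x"
  by (induction x arbitrary: y) (auto simp: zip_Cons1 split: list.splits)

lemma ev_iota_star:
  "ev h (iota_star q qi n a b) =
    (-q) ^ b * (-qi) ^ a * col_minor q (\<lambda>v. h (map prod.swap v)) (omit n b) ({1..n} - {a})"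
proof -
  have "distinct (permutations_of_set_list (omit n a))"
    by (rule distinct_permutations_of_set_list) (simp add: omit_def)
  then have "ev h (qminor q (omit n a) (omit n b)) =
      (\<Sum>p\<in>permutations_of_set ({1..n} - {a}). (-q) ^ ninv p * h (zip p (omit n b)))"
    by (simp add: ev_def qminor_def comp_def sum_list_distinct_conv_sum_set
        set_permutations_of_set_list_omit)
  then show ?thesis
    by (simp add: iota_star_def ev_cscale col_minor_def map_swap_zip)
qed

lemma iota_star_words:
  assumes "a \<in> {1..n}" "b \<in> {1..n}" "x \<in> set (iota_star q qi n a b)"
  shows "length (snd x) = n - 1" "set (snd x) \<subseteq> gens n"
proof -
  obtain p where p: "p \<in> permutations_of_set ({1..n} - {a})" "snd x = zip p (omit n b)"
    using assms(3) set_permutations_of_set_list_omit[of n a]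
    by (auto simp: iota_star_def cscale_def qminor_def)
  then show "length (snd x) = n - 1"
    using length_finite_permutations_of_set[OF p(1)] length_omit[OF assms(2)] assms(1) by simp
  show "set (snd x) \<subseteq> gens n"
    using p permutations_of_setD(1)[OF p(1)] set_zip_subset_gens[of p n "omit n b"]
    by (auto simp: set_omit)
qed

lemma cvec_cone: "cvec cone w = (if w = [] then 1 else 0)"
  by (auto simp: cvec_def cone_def)

lemma cvec_cmul_single:
  "cvec (cmul [(1, k)] c) w = (if take (length k) w = k then cvec c (drop (length k) w) else 0)"
  unfolding cvec_def cmul_def by (induction c) (auto simp: append_eq_conv_conj)

lemma cvec_cmul_uniform_length:
  assumes "\<And>x. x \<in> set c \<Longrightarrow> length (snd x) = L"
  shows "cvec (cmul c d) w = cvec c (take L w) * cvec d (drop L w)"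
  using assms
proof (induction c)
  case Nil
  then show ?case by (simp add: cvec_def cmul_def)
next
  case (Cons x c)
  have "length (snd x) = L" using Cons.prems by simp
  then have "(\<Sum>y\<leftarrow>d. if snd x @ snd y = w then fst x * fst y else 0) =
      (if snd x = take L w then fst x else 0) * cvec d (drop L w)"
    unfolding cvec_def by (induction d) (auto simp: append_eq_conv_conj algebra_simps)
  then show ?case
    using Cons by (simp add: cvec_def cmul_def comp_def algebra_simps cong: if_cong)
qed

lemma cvec_kappa1:
  "cvec (kappa1 q n a) p =
    (if p \<in> permutations_of_set ({1..n} - {a}) then (-q) ^ a * (-q) ^ ninv p else 0)"
proof -
  have "distinct (permutations_of_set_list (omit n a))"
    by (rule distinct_permutations_of_set_list) (simp add: omit_def)
  then have "cvec (kappa1 q n a) p =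
      (\<Sum>x\<in>permutations_of_set ({1..n} - {a}). if x = p then (-q) ^ a * (-q) ^ ninv x else 0)"
    unfolding cvec_def kappa1_def
    by (simp add: comp_def sum_list_distinct_conv_sum_set set_permutations_of_set_list_omit
        cong: if_cong)
  then show ?thesis by simp
qed

lemma length_kappa1: "a \<in> {1..n} \<Longrightarrow> x \<in> set (kappa1 q n a) \<Longrightarrow> length (snd x) = n - 1"
  using set_permutations_of_set_list_omit[of n a] length_finite_permutations_of_set[of _ "{1..n} - {a}"]
  by (auto simp: kappa1_def)

definition kappa_tensor :: "'a::comm_ring_1 \<Rightarrow> nat \<Rightarrow> nat list \<Rightarrow> nat list \<Rightarrow> 'a"
  where "kappa_tensor q n l w = cvec (foldr cmul (map (kappa1 q n) l) cone) w"

lemma kappa_tensor_Nil: "kappa_tensor q n [] w = (if w = [] then 1 else 0)"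
  by (simp add: kappa_tensor_def cvec_cone)

lemma kappa_tensor_Cons:
  "a \<in> {1..n} \<Longrightarrow>
    kappa_tensor q n (a # l) w = cvec (kappa1 q n a) (take (n - 1) w) * kappa_tensor q n l (drop (n - 1) w)"
  unfolding kappa_tensor_def by (simp add: cvec_cmul_uniform_length[where L = "n - 1"] length_kappa1)

lemma kappa_mat_eq_kappa_tensor:
  "kappa_mat q n w (k, l) = (if take (length k) w = k then kappa_tensor q n l (drop (length k) w) else 0)"
  by (simp add: kappa_mat_def kappa_tensor_def cvec_cmul_single)

lemma kappa_tensor_concat_omit:
  assumes "set j \<subseteq> {1..n}" "set j' \<subseteq> {1..n}" "length j' = length j"
  shows "kappa_tensor q n j' (concat (map (omit n) j)) = (if j' = j then (-q) ^ sum_list j else 0)"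
  using assms
proof (induction j arbitrary: j')
  case Nil
  then show ?case by (simp add: kappa_tensor_Nil)
next
  case (Cons a j)
  obtain a' j'' where j': "j' = a' # j''" using Cons.prems(3) by (cases j') auto
  have a: "a \<in> {1..n}" "a' \<in> {1..n}" using Cons.prems j' by auto
  have "kappa_tensor q n j' (concat (map (omit n) (a # j))) =
      cvec (kappa1 q n a') (omit n a) * kappa_tensor q n j'' (concat (map (omit n) j))"
    using length_omit[OF a(1)] by (simp add: j' kappa_tensor_Cons[OF a(2)])
  also have "\<dots> = (if a' = a then (-q) ^ a else 0) * (if j'' = j then (-q) ^ sum_list j else 0)"
    using Cons.IH[of j''] Cons.prems j' omit_in_permutations_of_set_iff[OF a]
    by (auto simp: cvec_kappa1 ninv_omit)
  finally show ?case using j' by (auto simp: power_add)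
qed

section \<open>The adjoint identity between kappa and iota\<close>

lemma sum_idx_kappa1:
  assumes "b \<in> {1..n}"
  shows "(\<Sum>w\<in>idx n (n - 1). h (zip z w) * cvec (kappa1 q n b) w) =
    (-q) ^ b * col_minor q h z ({1..n} - {b})"
proof -
  have "(\<Sum>w\<in>idx n (n - 1). h (zip z w) * cvec (kappa1 q n b) w) =
      (\<Sum>w\<in>idx n (n - 1) \<inter> permutations_of_set ({1..n} - {b}). (-q) ^ b * ((-q) ^ ninv w * h (zip z w)))"
    by (subst sum.inter_restrict[OF finite_idx]) (auto simp: cvec_kappa1 mult_ac intro!: sum.cong)
  also have "idx n (n - 1) \<inter> permutations_of_set ({1..n} - {b}) = permutations_of_set ({1..n} - {b})"
    using permutations_of_set_subset_idx[OF assms] by blast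
  finally show ?thesis by (simp add: col_minor_def sum_distrib_left)
qed

text \<open>Up to the factor (-q)^(b-a), iota(x*_ab) is the quantum minor whose row permutations
  kappa(v*_a) sums over; transposing it moves the permutation to the column side, next to z.\<close>
lemma kappa1_iota_star:
  assumes qi: "q * qi = 1" and h: "respects_Aq_rels q qi n h (n - 1)"
    and z: "z \<in> permutations_of_set ({1..n} - {a})" and ab: "a \<in> {1..n}" "b \<in> {1..n}"
  shows "cvec (kappa1 q n a) z * ev h (iota_star q qi n a b) = (-q) ^ b * col_minor q h z ({1..n} - {b})"
proof -
  have lz: "length z = n - 1" and sz: "set z \<subseteq> {1..n}"
    using length_finite_permutations_of_set[OF z] permutations_of_setD(1)[OF z] ab by auto
  have "cvec (kappa1 q n a) z * ev h (iota_star q qi n a b) = ((-q) ^ a * (-qi) ^ a) *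
      ((-q) ^ b * ((-q) ^ ninv z * col_minor q (\<lambda>v. h (map prod.swap v)) (omit n b) ({1..n} - {a})))"
    using z by (simp add: cvec_kappa1 ev_iota_star mult_ac)
  also have "(-q) ^ a * (-qi) ^ a = 1" by (simp add: power_mult_distrib[symmetric] qi)
  also have "col_minor q (\<lambda>v. h (map prod.swap v)) (omit n b) ({1..n} - {a}) =
      col_minor q h (sort z) ({1..n} - {b})"
  proof -
    have "sort z = sorted_list_of_set ({1..n} - {a})"
      using permutations_of_setD[OF z] by (metis sorted_list_of_set_sort_remdups distinct_remdups_id)
    then show ?thesis
      unfolding omit_eq_sorted_list_of_set
      using col_minor_transpose[OF h, of "{1..n} - {a}" "{1..n} - {b}"] ab by simp
  qed
  also have "(-q) ^ ninv z * col_minor q h (sort z) ({1..n} - {b}) = col_minor q h z ({1..n} - {b})"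
    using col_minor_sort[OF qi, of n h z] h lz sz ab by simp
  finally show ?thesis by simp
qed

lemma kappa1_iota_star_adjoint:
  assumes qi: "q * qi = 1" and h: "respects_Aq_rels q qi n h (n - 1)"
    and z: "z \<in> idx n (n - 1)" and b: "b \<in> {1..n}"
  shows "(\<Sum>a\<in>{1..n}. cvec (kappa1 q n a) z * ev h (iota_star q qi n a b)) =
    (\<Sum>w\<in>idx n (n - 1). h (zip z w) * cvec (kappa1 q n b) w)"
proof (cases "distinct z")
  case False
  have lz: "length z = n - 1" and sz: "set z \<subseteq> {1..n}" using z by (auto simp: idx_def)
  have "cvec (kappa1 q n a) z = 0" for a
    using False by (auto simp: cvec_kappa1 permutations_of_set_def)
  moreover have "col_minor q h z ({1..n} - {b}) = 0"
    using col_minor_not_distinct[OF qi, of n h z] h lz sz b False by simp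
  ultimately show ?thesis unfolding sum_idx_kappa1[OF b] by simp
next
  case True
  have sz: "set z \<subseteq> {1..n}" "card (set z) = n - 1"
    using z True by (auto simp: idx_def distinct_card)
  then have "set z \<noteq> {1..n}" using b by auto
  then obtain a0 where a0: "a0 \<in> {1..n}" "a0 \<notin> set z" using sz by blast
  then have set_z: "set z = {1..n} - {a0}"
    using sz by (intro card_subset_eq) auto
  have za: "z \<in> permutations_of_set ({1..n} - {a}) \<longleftrightarrow> a = a0" if "a \<in> {1..n}" for a
  proof -
    have "{1..n} - {a0} = {1..n} - {a} \<longleftrightarrow> a = a0" using that a0(1) by blast
    then show ?thesis using True set_z by (simp add: permutations_of_set_def)
  qed
  have "(\<Sum>a\<in>{1..n}. cvec (kappa1 q n a) z * ev h (iota_star q qi n a b)) =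
      cvec (kappa1 q n a0) z * ev h (iota_star q qi n a0 b)"
  proof -
    have "cvec (kappa1 q n a) z = 0" if "a \<in> {1..n} - {a0}" for a
      using that za by (simp add: cvec_kappa1)
    then show ?thesis
      using sum.remove[OF finite_atLeastAtMost a0(1), of "\<lambda>a. cvec (kappa1 q n a) z * ev h (iota_star q qi n a b)"]
      by simp
  qed
  then show ?thesis
    unfolding sum_idx_kappa1[OF b] using kappa1_iota_star[OF qi h _ a0(1) b] za[OF a0(1)] by simp
qed

lemma sum_kappa_tensor_iota_stars_Cons:
  assumes "b \<in> {1..n}"
  shows "(\<Sum>j\<in>idx n (Suc (length l)). kappa_tensor q n j z *
      ev h (foldr cmul (map2 (iota_star q qi n) j (b # l)) cone)) =
    (\<Sum>a\<in>{1..n}. cvec (kappa1 q n a) (take (n - 1) z) *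
      ev (\<lambda>u. \<Sum>j\<in>idx n (length l). kappa_tensor q n j (drop (n - 1) z) *
        ev (\<lambda>v. h (u @ v)) (foldr cmul (map2 (iota_star q qi n) j l) cone))
      (iota_star q qi n a b))"
  by (auto simp: sum_idx_Suc kappa_tensor_Cons ev_cmul ev_sum ev_const_mult sum_distrib_left mult_ac
      intro!: sum.cong)

lemma sum_idx_kappa_tensor_Cons:
  assumes b: "b \<in> {1..n}" and za: "length za = n - 1"
  shows "(\<Sum>w\<in>idx n (n - 1 + M). H (zip (za @ zb) w) * kappa_tensor q n (b # l) w) =
    (\<Sum>w\<in>idx n M. kappa_tensor q n l w *
      (\<Sum>w1\<in>idx n (n - 1). H (zip za w1 @ zip zb w) * cvec (kappa1 q n b) w1))"
proof -
  have "zip (za @ zb) (w1 @ w) = zip za w1 @ zip zb w"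
    "kappa_tensor q n (b # l) (w1 @ w) = cvec (kappa1 q n b) w1 * kappa_tensor q n l w"
    if "w1 \<in> idx n (n - 1)" for w1 w
    using that za by (auto simp: idx_def kappa_tensor_Cons[OF b])
  then show ?thesis
    by (simp add: sum_idx_add sum_distrib_left sum.swap[of _ "idx n M"] mult_ac cong: sum.cong)
qed

lemma kappa_tensor_iota_stars_adjoint:
  assumes qi: "q * qi = 1"
  shows "respects_Aq_rels q qi n h ((n - 1) * length l) \<Longrightarrow> set l \<subseteq> {1..n} \<Longrightarrow>
    z \<in> idx n ((n - 1) * length l) \<Longrightarrow>
    (\<Sum>j\<in>idx n (length l). kappa_tensor q n j z * ev h (foldr cmul (map2 (iota_star q qi n) j l) cone)) =
    (\<Sum>w\<in>idx n ((n - 1) * length l). h (zip z w) * kappa_tensor q n l w)"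
proof (induction l arbitrary: h z)
  case Nil
  have "idx n 0 = {[]}" by (auto simp: idx_def)
  moreover have "z = []" using Nil by (auto simp: idx_def)
  ultimately show ?case by (simp add: kappa_tensor_Nil ev_cone)
next
  case (Cons b l)
  define N where "N = n - 1"
  define M where "M = N * length l"
  define z1 where "z1 = take N z"
  define z2 where "z2 = drop N z"
  let ?R = "\<lambda>j. foldr cmul (map2 (iota_star q qi n) j l) cone"
  have b: "b \<in> {1..n}" and l: "set l \<subseteq> {1..n}" using Cons.prems by auto
  have z12: "z1 \<in> idx n N" "z2 \<in> idx n M" "z = z1 @ z2"
    using Cons.prems(3)
    by (auto simp: idx_def N_def M_def z1_def z2_def dest: in_set_takeD in_set_dropD)
  have h: "respects_Aq_rels q qi n h (N + M)" using Cons.prems(1) by (simp add: N_def M_def)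
  have IH: "(\<Sum>j\<in>idx n (length l). kappa_tensor q n j z2 * ev (\<lambda>v. h (u @ v)) (?R j)) =
      (\<Sum>w\<in>idx n M. h (u @ zip z2 w) * kappa_tensor q n l w)"
    if "set u \<subseteq> gens n" "length u = N" for u
    using Cons.IH[of "\<lambda>v. h (u @ v)" z2] respects_Aq_rels_prefix[of q qi n h u M] h that l z12
    by (simp add: M_def N_def)
  have "(\<Sum>j\<in>idx n (length (b # l)). kappa_tensor q n j z *
        ev h (foldr cmul (map2 (iota_star q qi n) j (b # l)) cone)) =
      (\<Sum>a\<in>{1..n}. cvec (kappa1 q n a) z1 *
        ev (\<lambda>u. \<Sum>j\<in>idx n (length l). kappa_tensor q n j z2 * ev (\<lambda>v. h (u @ v)) (?R j))
          (iota_star q qi n a b))"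
    using sum_kappa_tensor_iota_stars_Cons[OF b] by (simp add: z1_def z2_def N_def)
  also have "\<dots> = (\<Sum>a\<in>{1..n}. cvec (kappa1 q n a) z1 *
      ev (\<lambda>u. \<Sum>w\<in>idx n M. h (u @ zip z2 w) * kappa_tensor q n l w) (iota_star q qi n a b))"
  proof (rule sum.cong[OF refl])
    fix a assume a: "a \<in> {1..n}"
    have "ev (\<lambda>u. \<Sum>j\<in>idx n (length l). kappa_tensor q n j z2 * ev (\<lambda>v. h (u @ v)) (?R j))
        (iota_star q qi n a b) =
      ev (\<lambda>u. \<Sum>w\<in>idx n M. h (u @ zip z2 w) * kappa_tensor q n l w) (iota_star q qi n a b)"
      by (rule ev_cong) (simp add: IH iota_star_words[OF a b] N_def)
    then show "cvec (kappa1 q n a) z1 *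
        ev (\<lambda>u. \<Sum>j\<in>idx n (length l). kappa_tensor q n j z2 * ev (\<lambda>v. h (u @ v)) (?R j))
          (iota_star q qi n a b) =
      cvec (kappa1 q n a) z1 *
        ev (\<lambda>u. \<Sum>w\<in>idx n M. h (u @ zip z2 w) * kappa_tensor q n l w) (iota_star q qi n a b)"
      by simp
  qed
  also have "\<dots> = (\<Sum>w\<in>idx n M. kappa_tensor q n l w *
      (\<Sum>a\<in>{1..n}. cvec (kappa1 q n a) z1 * ev (\<lambda>u. h (u @ zip z2 w)) (iota_star q qi n a b)))"
    by (simp add: ev_sum ev_const_mult[symmetric] sum_distrib_left mult_ac) (rule sum.swap)
  also have "\<dots> = (\<Sum>w\<in>idx n M. kappa_tensor q n l w *
      (\<Sum>w1\<in>idx n N. h (zip z1 w1 @ zip z2 w) * cvec (kappa1 q n b) w1))"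
  proof (rule sum.cong[OF refl])
    fix w assume "w \<in> idx n M"
    then have "respects_Aq_rels q qi n (\<lambda>v. h (v @ zip z2 w)) N"
      using h z12 set_zip_subset_gens[of z2 n w]
      by (intro respects_Aq_rels_suffix) (auto simp: idx_def)
    then show "kappa_tensor q n l w *
        (\<Sum>a\<in>{1..n}. cvec (kappa1 q n a) z1 * ev (\<lambda>u. h (u @ zip z2 w)) (iota_star q qi n a b)) =
      kappa_tensor q n l w * (\<Sum>w1\<in>idx n N. h (zip z1 w1 @ zip z2 w) * cvec (kappa1 q n b) w1)"
      using kappa1_iota_star_adjoint[OF qi _ _ b] z12 by (simp add: N_def)
  qed
  also have "\<dots> = (\<Sum>w\<in>idx n ((n - 1) * length (b # l)). h (zip z w) * kappa_tensor q n (b # l) w)"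
    using sum_idx_kappa_tensor_Cons[OF b, where za = z1 and M = M and H = h and zb = z2 and l = l] z12
    by (simp add: N_def M_def idx_def)
  finally show ?case .
qed

lemma sum_idx2_kappa_mat:
  assumes "take r w \<in> idx n r"
  shows "(\<Sum>x\<in>idx2 n r s. kappa_mat q n w x * F x) =
    (\<Sum>j\<in>idx n s. kappa_tensor q n j (drop r w) * F (take r w, j))"
proof -
  have "r \<le> length w" using assms by (auto simp: idx_def)
  have "(\<Sum>x\<in>idx2 n r s. kappa_mat q n w x * F x) =
      (\<Sum>i\<in>idx n r. \<Sum>j\<in>idx n s. kappa_mat q n w (i, j) * F (i, j))"
    unfolding idx2_def by (simp add: sum.cartesian_product split_def)
  also have "\<dots> = (\<Sum>i\<in>idx n r. if i = take r w then
      (\<Sum>j\<in>idx n s. kappa_tensor q n j (drop r w) * F (i, j)) else 0)"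
    using \<open>r \<le> length w\<close> by (intro sum.cong) (auto simp: kappa_mat_eq_kappa_tensor idx_def)
  finally show ?thesis using assms by (simp add: finite_idx)
qed

lemma sum_idx_kappa_mat:
  assumes "k \<in> idx n r"
  shows "(\<Sum>w\<in>idx n (r + L). F w * kappa_mat q n w (k, l)) =
    (\<Sum>w2\<in>idx n L. F (k @ w2) * kappa_tensor q n l w2)"
proof -
  have "(\<Sum>w\<in>idx n (r + L). F w * kappa_mat q n w (k, l)) =
      (\<Sum>w1\<in>idx n r. if w1 = k then (\<Sum>w2\<in>idx n L. F (k @ w2) * kappa_tensor q n l w2) else 0)"
    unfolding sum_idx_add using assms
    by (intro sum.cong) (auto simp: kappa_mat_eq_kappa_tensor idx_def)
  then show ?thesis using assms by (simp add: finite_idx)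
qed

lemma kappa_mat_Theta'_iota_eq_Theta_kappa_mat:
  assumes qi: "q * qi = 1" and f: "respects_Aq_rels q qi n f (r + (n - 1) * s)"
    and w: "w \<in> idx n (r + (n - 1) * s)" and y: "y \<in> idx2 n r s"
  shows "(\<Sum>x\<in>idx2 n r s. kappa_mat q n w x * Theta' n r s (\<lambda>i j k l. ev f (iota_mon q qi n i j k l)) x y) =
    (\<Sum>w'\<in>idx n (r + (n - 1) * s). Theta f w w' * kappa_mat q n w' y)"
proof -
  obtain k l where y: "y = (k, l)" "k \<in> idx n r" "l \<in> idx n s" using y by (auto simp: idx2_def)
  define i0 where "i0 = take r w"
  define z where "z = drop r w"
  define g where "g = (\<lambda>v. f (zip i0 k @ v))"
  have i0: "i0 \<in> idx n r" and z: "z \<in> idx n ((n - 1) * length l)" and lk: "length k = r"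
    using w y by (auto simp: idx_def i0_def z_def dest: in_set_takeD in_set_dropD)
  have g: "respects_Aq_rels q qi n g ((n - 1) * length l)"
    unfolding g_def using f i0 y set_zip_subset_gens[of i0 n k]
    by (intro respects_Aq_rels_prefix) (auto simp: idx_def)
  have "(\<Sum>x\<in>idx2 n r s. kappa_mat q n w x * Theta' n r s (\<lambda>i j k l. ev f (iota_mon q qi n i j k l)) x y) =
      (\<Sum>j\<in>idx n (length l). kappa_tensor q n j z * ev g (foldr cmul (map2 (iota_star q qi n) j l) cone))"
    using i0 y unfolding sum_idx2_kappa_mat[OF i0[unfolded i0_def]]
    by (intro sum.cong) (auto simp: Theta'_def idx2_def idx_def iota_mon_def ev_cmul_single g_def
        i0_def z_def)
  also have "\<dots> = (\<Sum>w2\<in>idx n ((n - 1) * length l). g (zip z w2) * kappa_tensor q n l w2)"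
    using kappa_tensor_iota_stars_adjoint[OF qi g _ z] y by (auto simp: idx_def)
  also have "\<dots> = (\<Sum>w'\<in>idx n (r + (n - 1) * s). Theta f w w' * kappa_mat q n w' y)"
  proof -
    have "zip w (k @ w2) = zip i0 k @ zip z w2" for w2
      using zip_append[of i0 k z w2] w lk by (simp add: i0_def z_def idx_def)
    then show ?thesis
      unfolding y(1) sum_idx_kappa_mat[OF y(2)] using y by (simp add: Theta_def g_def idx_def)
  qed
  finally show ?thesis .
qed

lemma kappa_mat_omit_row:
  assumes "(i, j) \<in> idx2 n r s" "x' \<in> idx2 n r s"
  shows "kappa_mat q n (i @ concat (map (omit n) j)) x' = (if x' = (i, j) then (-q) ^ sum_list j else 0)"
proof -
  obtain i' j' where x': "x' = (i', j')" "i' \<in> idx n r" "j' \<in> idx n s" using assms(2) by (auto simp: idx2_def)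
  then have "length i' = length i" using assms(1) by (simp add: idx2_def idx_def)
  then have "kappa_mat q n (i @ concat (map (omit n) j)) x' =
      (if i' = i then kappa_tensor q n j' (concat (map (omit n) j)) else 0)"
    by (simp add: x' kappa_mat_eq_kappa_tensor)
  then show ?thesis
    using kappa_tensor_concat_omit[of j n j' q] assms(1) x' by (auto simp: idx2_def idx_def)
qed

lemma omit_row_in_idx:
  assumes "(i, j) \<in> idx2 n r s"
  shows "i @ concat (map (omit n) j) \<in> idx n (r + (n - 1) * s)"
proof -
  have "\<forall>a\<in>set j. length (omit n a) = n - 1" using assms length_omit by (auto simp: idx2_def idx_def)
  then have "length (concat (map (omit n) j)) = length j * (n - 1)"
    by (induction j) auto
  then show ?thesis using assms by (auto simp: idx2_def idx_def set_omit)
qed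

text \<open>The row indexed by i followed by the words omit n a, for a in j, meets the single
  column (i, j).\<close>
lemma kappa_mat_cancel_left:
  fixes N N' :: "nat list \<times> nat list \<Rightarrow> nat list \<times> nat list \<Rightarrow> 'a::comm_ring_1"
  assumes qi: "q * qi = 1"
    and supp: "\<And>x y. N x y \<noteq> 0 \<Longrightarrow> x \<in> idx2 n r s \<and> y \<in> idx2 n r s"
      "\<And>x y. N' x y \<noteq> 0 \<Longrightarrow> x \<in> idx2 n r s \<and> y \<in> idx2 n r s"
    and eq: "\<And>w y. w \<in> idx n (r + (n - 1) * s) \<Longrightarrow> y \<in> idx2 n r s \<Longrightarrow>
      (\<Sum>x\<in>idx2 n r s. kappa_mat q n w x * N x y) = (\<Sum>x\<in>idx2 n r s. kappa_mat q n w x * N' x y)"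
  shows "N = N'"
proof (intro ext)
  fix x y
  show "N x y = N' x y"
  proof (cases "x \<in> idx2 n r s \<and> y \<in> idx2 n r s")
    case False
    then have "N x y = 0" "N' x y = 0" using supp by blast+
    then show ?thesis by simp
  next
    case True
    obtain i j where x: "x = (i, j)" by (cases x)
    with True have xI: "(i, j) \<in> idx2 n r s" by simp
    have row: "(\<Sum>x'\<in>idx2 n r s. kappa_mat q n (i @ concat (map (omit n) j)) x' * M x' y) =
        (-q) ^ sum_list j * M x y" for M :: "nat list \<times> nat list \<Rightarrow> nat list \<times> nat list \<Rightarrow> 'a"
    proof -
      have "(\<Sum>x'\<in>idx2 n r s. kappa_mat q n (i @ concat (map (omit n) j)) x' * M x' y) =
          (\<Sum>x'\<in>idx2 n r s. if x' = x then (-q) ^ sum_list j * M x y else 0)"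
        using True by (intro sum.cong refl) (simp add: x kappa_mat_omit_row[OF xI])
      then show ?thesis using True by (simp add: finite_idx idx2_def)
    qed
    have "(-q) ^ sum_list j * N x y = (-q) ^ sum_list j * N' x y"
      using eq[OF omit_row_in_idx[OF xI], of y] True by (simp add: row)
    then have "((-qi) ^ sum_list j * (-q) ^ sum_list j) * N x y = ((-qi) ^ sum_list j * (-q) ^ sum_list j) * N' x y"
      by (simp add: mult.assoc)
    moreover have "(-qi) ^ sum_list j * (-q) ^ sum_list j = 1"
      by (simp add: power_mult_distrib[symmetric] qi mult.commute)
    ultimately show ?thesis by simp
  qed
qed

theorem lemma5p2:
  fixes q qi :: "'a::comm_ring_1" and n r s m :: nat
    and f :: "(nat \<times> nat) list \<Rightarrow> 'a"
  assumes "q * qi = 1" and "n \<ge> 1" and "m = r + (n - 1) * s"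
    and "Aq_dual q qi n m f"
  shows "pi_map q n r s (Theta f) =
         Theta' n r s (\<lambda>i j k l. ev f (iota_mon q qi n i j k l))"
proof -
  let ?N0 = "Theta' n r s (\<lambda>i j k l. ev f (iota_mon q qi n i j k l))"
  have f: "respects_Aq_rels q qi n f (r + (n - 1) * s)"
    using Aq_dual_imp_respects_Aq_rels[OF assms(4)] assms(3) by simp
  have supp0: "x \<in> idx2 n r s \<and> y \<in> idx2 n r s" if "?N0 x y \<noteq> 0" for x y
    using that by (auto simp: Theta'_def split: if_splits)
  note intertwines = kappa_mat_Theta'_iota_eq_Theta_kappa_mat[OF assms(1) f]
  show ?thesis
    unfolding pi_map_def
  proof (rule the_equality)
    show "(\<forall>x y. ?N0 x y \<noteq> 0 \<longrightarrow> x \<in> idx2 n r s \<and> y \<in> idx2 n r s) \<and>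
      (\<forall>w\<in>idx n (r + (n - 1) * s). \<forall>y\<in>idx2 n r s.
        (\<Sum>x\<in>idx2 n r s. kappa_mat q n w x * ?N0 x y) =
        (\<Sum>w'\<in>idx n (r + (n - 1) * s). Theta f w w' * kappa_mat q n w' y))"
      using supp0 intertwines by blast
  next
    fix N assume N: "(\<forall>x y. N x y \<noteq> 0 \<longrightarrow> x \<in> idx2 n r s \<and> y \<in> idx2 n r s) \<and>
      (\<forall>w\<in>idx n (r + (n - 1) * s). \<forall>y\<in>idx2 n r s.
        (\<Sum>x\<in>idx2 n r s. kappa_mat q n w x * N x y) =
        (\<Sum>w'\<in>idx n (r + (n - 1) * s). Theta f w w' * kappa_mat q n w' y))"
    show "N = ?N0"
    proof (rule kappa_mat_cancel_left[OF assms(1)])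
      show "x \<in> idx2 n r s \<and> y \<in> idx2 n r s" if "N x y \<noteq> 0" for x y
        using N that by blast
      show "x \<in> idx2 n r s \<and> y \<in> idx2 n r s" if "?N0 x y \<noteq> 0" for x y
        using supp0 that .
      show "(\<Sum>x\<in>idx2 n r s. kappa_mat q n w x * N x y) = (\<Sum>x\<in>idx2 n r s. kappa_mat q n w x * ?N0 x y)"
        if "w \<in> idx n (r + (n - 1) * s)" "y \<in> idx2 n r s" for w y
        using N intertwines[OF that] that by simp
    qed
  qed
qed

end
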